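(* Let $p$ be a prime, $0\le\sigma'<\sigma<1$, $\delta:=(\sigma-\sigma')/(1-\sigma)$, and $a_n$ ($n\in\mathbb{N}$) defined by $a_n:=p^{\lfloor\sigma' r\rfloor}$ if $n=p^r(p^{\lfloor\delta r\rfloor+1}+1)-1$ for some $r\in\mathbb{N}$ and $a_n:=0$ otherwise. For $n\in\mathbb{N}$ let $c_n:=\frac{1}{n+1}\sum_{k\ge n}a_k\binom{k}{n}t^{k-n}\in\mathbb{Q}_p\{\{t\}\}$ and $y_g:=\sum_{n\in\mathbb{N}}c_n(X-t)^{n+1}\in\mathbb{Q}_p\{\{t\}\}[[X-t]]$. Then $|c_n|/(n+1)^{1-\sigma'}=O(1)$ as $n\to\infty$ (indeed $\le p$ for all $n$), while for every $\lambda\in[0,1-\sigma')$, $\sup_n|c_n|/(n+1)^{\lambda}=\infty$. That is, $y_g$ is exactly of log-growth $1-\sigma'$.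
   Context: $|\cdot|_p$ is the $p$-adic absolute value with $|p|_p=p^{-1}$; $\lfloor x\rfloor$ is the largest integer $\le x$. $t$ is a formal variable and $\mathbb{Q}_p\{\{t\}\}$ is the fraction field of the $p$-adic completion of $\mathbb{Z}_p[[t]][t^{-1}]$, equipped with the Gauss norm $|\sum_i b_it^i|=\sup_i|b_i|_p$. A series $\sum_m c'_m(X-t)^m$ is of log-growth $\lambda$ if $|c'_{n+1}|/(n+1)^\lambda=O(1)$ as $n\to\infty$, and exactly of log-growth $\lambda$ if it is of log-growth $\lambda$ but not of log-growth $\lambda'$ for any $\lambda'<\lambda$. *)

theory Defs
  imports "HOL-Analysis.Analysis" "HOL-Computational_Algebra.Primes"
begin

definition padic_val_rat :: "nat \<Rightarrow> rat \<Rightarrow> int" where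
  "padic_val_rat p q = (case quotient_of q of (a, b) \<Rightarrow>
      int (multiplicity (int p) a) - int (multiplicity (int p) b))"

definition padic_abs :: "nat \<Rightarrow> rat \<Rightarrow> real" where
  "padic_abs p q = (if q = 0 then 0 else real p powr (- real_of_int (padic_val_rat p q)))"

text \<open>An element of Q_p{{t}} with rational coefficients and only nonnegative powers of t
  is represented by its coefficient sequence f (f j = coefficient of t^j).
  Gauss norm: sup_j |f j|_p (in ereal, so that it can be infinite).\<close>
definition gauss_norm :: "nat \<Rightarrow> (nat \<Rightarrow> rat) \<Rightarrow> ereal" where
  "gauss_norm p f = (SUP j. ereal (padic_abs p (f j)))"

definition idx :: "nat \<Rightarrow> real \<Rightarrow> nat \<Rightarrow> nat" where
  "idx p \<delta> r = p ^ r * (p ^ (nat \<lfloor>\<delta> * real r\<rfloor> + 1) + 1) - 1"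

definition seq_a :: "nat \<Rightarrow> real \<Rightarrow> real \<Rightarrow> nat \<Rightarrow> rat" where
  "seq_a p \<sigma> \<sigma>' n =
     (let \<delta> = (\<sigma> - \<sigma>') / (1 - \<sigma>) in
      if \<exists>r. n = idx p \<delta> r
      then of_nat p ^ nat \<lfloor>\<sigma>' * real (THE r. n = idx p \<delta> r)\<rfloor>
      else 0)"

text \<open>c_n = 1/(n+1) sum_{k>=n} a_k binom(k,n) t^(k-n): coefficient of t^j.\<close>
definition coef_c :: "nat \<Rightarrow> real \<Rightarrow> real \<Rightarrow> nat \<Rightarrow> nat \<Rightarrow> rat" where
  "coef_c p \<sigma> \<sigma>' n j = seq_a p \<sigma> \<sigma>' (n + j) * of_nat ((n + j) choose n) / of_nat (n + 1)"

text \<open>y_g = sum_m c'_m (X-t)^m with c'_0 = 0 and c'_(n+1) = c_n.\<close>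
definition coef_y :: "nat \<Rightarrow> real \<Rightarrow> real \<Rightarrow> nat \<Rightarrow> nat \<Rightarrow> rat" where
  "coef_y p \<sigma> \<sigma>' m = (if m = 0 then (\<lambda>_. 0) else coef_c p \<sigma> \<sigma>' (m - 1))"

definition of_log_growth :: "nat \<Rightarrow> (nat \<Rightarrow> nat \<Rightarrow> rat) \<Rightarrow> real \<Rightarrow> bool" where
  "of_log_growth p c' lam =
     (\<exists>B::real. \<forall>\<^sub>F n in sequentially.
        gauss_norm p (c' (n + 1)) \<le> ereal (B * real (n + 1) powr lam))"

definition exactly_log_growth :: "nat \<Rightarrow> (nat \<Rightarrow> nat \<Rightarrow> rat) \<Rightarrow> real \<Rightarrow> bool" where
  "exactly_log_growth p c' lam =
     (of_log_growth p c' lam \<and> (\<forall>lam'. lam' < lam \<longrightarrow> \<not> of_log_growth p c' lam'))"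

end

theory Submission
  imports Defs
begin

(* Write v for the p-adic valuation on the
   integers, k_r = idx r = p^r (p^(m_r+1) + 1) - 1 for the support of a, and e_r = floor(\<sigma>' r).
   The t^j-coefficient of c_n is nonzero only if n + j = k_r, and then it equals
   p^(e_r) binom(k_r, n)/(n+1), so its absolute value is p^(v(n+1) - e_r - v(binom(k_r, n))).

   Upper bound: v(k_r + 1) = r and (k+1) binom(k,n) = (n+1) binom(k+1,n+1) give
   v(n+1) - v(binom(k_r,n)) \<le> u := min r (v(n+1)); as e_r \<ge> \<sigma>' u - 1 and p^u \<le> n+1 the
   coefficient has absolute value \<le> p (n+1)^(1-\<sigma>').
   Lower bound: for n = p^r - 1 we have k_r = p^(r+m_r+1) + n, and binom(N + n, n) is a p-adic unit
   whenever p^r divides N and n < p^r; hence |c_n| \<ge> p^(r - e_r) \<ge> (n+1)^(1-\<sigma>').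
   Since these n are unbounded, |c_n| exceeds B (n+1)^\<lambda> infinitely often for every \<lambda> < 1-\<sigma>',
   which gives both the unbounded supremum and the failure of smaller log-growth. *)

subsection \<open>p-adic absolute values of quotients of integers\<close>

text \<open>The valuation of a/b can be read off from any representation, not only the reduced one.\<close>
lemma padic_val_rat_of_int_div:
  assumes p: "prime p" and a: "a \<noteq> 0" and b: "b \<noteq> 0"
  shows "padic_val_rat p (of_int a / of_int b) =
     int (multiplicity (int p) a) - int (multiplicity (int p) b)"
proof -
  obtain a' b' where q: "quotient_of (of_int a / of_int b) = (a', b')"
    by (cases "quotient_of (of_int a / of_int b)") auto
  have b': "b' > 0" using quotient_of_denom_pos[OF q] .
  have "(of_int a / of_int b :: rat) = of_int a' / of_int b'" using quotient_of_div[OF q] .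
  hence "(of_int (a * b') :: rat) = of_int (a' * b)" using b b' by (simp add: field_simps)
  hence cross: "a * b' = a' * b" by (simp only: of_int_eq_iff)
  have a': "a' \<noteq> 0" using cross a b' by auto
  have "prime_elem (int p)" using p by simp
  moreover have "multiplicity (int p) (a * b') = multiplicity (int p) (a' * b)" using cross by simp
  ultimately have "multiplicity (int p) a + multiplicity (int p) b'
                   = multiplicity (int p) a' + multiplicity (int p) b"
    using a b a' b' by (simp add: prime_elem_multiplicity_mult_distrib)
  thus ?thesis unfolding padic_val_rat_def q by simp
qed

lemma padic_abs_of_int_div:
  assumes "prime p" and "a \<noteq> 0" and "b \<noteq> 0"
  shows "padic_abs p (of_int a / of_int b) =
     real p powr (real (multiplicity (int p) b) - real (multiplicity (int p) a))"
  using padic_val_rat_of_int_div[OF assms] assms(2,3) unfolding padic_abs_def by simp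

subsection \<open>Valuations of binomial coefficients\<close>

lemma multiplicity_add_multiple:
  fixes q N x :: int
  assumes q: "q > 1" and d: "q ^ s dvd N" and x: "0 < x" "x < q ^ s"
  shows "multiplicity q (N + x) = multiplicity q x"
proof -
  let ?v = "multiplicity q x"
  have vx: "q ^ ?v dvd x" by (rule multiplicity_dvd)
  hence "q ^ ?v < q ^ s" using x zdvd_imp_le[OF vx] by linarith
  hence "?v < s" by (rule power_less_imp_less_exp[OF q])
  hence dN: "q ^ Suc ?v dvd N" using d by (meson Suc_leI dvd_trans le_imp_power_dvd)
  show ?thesis
  proof (rule multiplicity_eqI)
    show "q ^ ?v dvd N + x"
      using dvd_add[OF dvd_trans[OF le_imp_power_dvd[of ?v "Suc ?v"] dN] vx] by simp
    show "\<not> q ^ Suc ?v dvd N + x"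
    proof
      assume "q ^ Suc ?v dvd N + x"
      hence "q ^ Suc ?v dvd x" using dN by (metis dvd_add_right_iff)
      moreover have "x \<noteq> 0" "\<not> is_unit q" using x q by auto
      ultimately have "Suc ?v \<le> ?v" by (intro multiplicity_geI)
      thus False by simp
    qed
  qed
qed

text \<open>From (k+1) binom(k,n) = (n+1) binom(k+1,n+1): the valuations on both sides agree.\<close>
lemma multiplicity_binomial_shift:
  assumes p: "prime p" and nk: "n \<le> k"
  shows "multiplicity (int p) (int (Suc k)) + multiplicity (int p) (int (k choose n))
       = multiplicity (int p) (int (Suc k choose Suc n)) + multiplicity (int p) (int (Suc n))"
proof -
  have "int (Suc k) * int (k choose n) = int (Suc k choose Suc n) * int (Suc n)"
    unfolding of_nat_mult[symmetric] Suc_times_binomial_eq ..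
  hence "multiplicity (int p) (int (Suc k) * int (k choose n))
       = multiplicity (int p) (int (Suc k choose Suc n) * int (Suc n))" by simp
  moreover have "prime_elem (int p)" using p by simp
  moreover have "k choose n \<noteq> 0" "Suc k choose Suc n \<noteq> 0" using nk by simp_all
  ultimately show ?thesis
    by (simp add: prime_elem_multiplicity_mult_distrib del: binomial_Suc_Suc of_nat_Suc)
qed

text \<open>binom(N+i, i) is a p-adic unit if p^s divides N and i < p^s (no carries in base p).\<close>
lemma multiplicity_binomial_unit:
  assumes p: "prime p" and d: "p ^ s dvd N"
  shows "i < p ^ s \<Longrightarrow> multiplicity (int p) (int (N + i choose i)) = 0"
proof (induction i)
  case 0
  thus ?case by simp
next
  case (Suc i)
  have "int p > 1" using p prime_gt_1_nat by simp
  moreover have "int p ^ s dvd int N" using d by (metis of_nat_dvd_iff of_nat_power)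
  moreover have "int (Suc i) < int p ^ s" using Suc.prems by (metis of_nat_less_iff of_nat_power)
  ultimately have "multiplicity (int p) (int N + int (Suc i)) = multiplicity (int p) (int (Suc i))"
    by (intro multiplicity_add_multiple) auto
  hence "multiplicity (int p) (int (Suc (N + i))) = multiplicity (int p) (int (Suc i))"
    by (simp only: of_nat_add[symmetric] add_Suc_right)
  moreover have "multiplicity (int p) (int (N + i choose i)) = 0" using Suc by simp
  ultimately have "multiplicity (int p) (int (Suc (N + i) choose Suc i)) = 0"
    using multiplicity_binomial_shift[OF p, of i "N + i"] by linarith
  thus ?case by (simp only: add_Suc_right)
qed

subsection \<open>The support of the sequence a\<close>

lemma idx_Suc: "p > 0 \<Longrightarrow> idx p d r + 1 = p ^ r * (p ^ (nat \<lfloor>d * real r\<rfloor> + 1) + 1)"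
  unfolding idx_def by simp

text \<open>The index sequence is strictly increasing, so the r with n = k_r is unique.\<close>
lemma idx_strict_mono:
  assumes p: "p > 1" and d: "d \<ge> 0"
  shows "strict_mono (idx p d)"
proof (rule strict_monoI_Suc)
  fix r
  let ?m = "nat \<lfloor>d * real r\<rfloor>" and ?m' = "nat \<lfloor>d * real (Suc r)\<rfloor>"
  have "?m \<le> ?m'" using d by (intro nat_mono floor_mono mult_left_mono) auto
  hence le: "p ^ (?m + 1) \<le> p ^ (?m' + 1)" using p by (simp add: power_increasing)
  have "idx p d r + 1 = p ^ r * (p ^ (?m + 1) + 1)" by (rule idx_Suc) (use p in simp)
  also have "\<dots> < p * (p ^ r * (p ^ (?m + 1) + 1))" using p by (intro n_less_m_mult_n) simp_all
  also have "\<dots> \<le> p * (p ^ r * (p ^ (?m' + 1) + 1))" using le by simp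
  also have "\<dots> = idx p d (Suc r) + 1" using p idx_Suc[of p d "Suc r"] by (simp add: algebra_simps)
  finally show "idx p d r < idx p d (Suc r)" by simp
qed

lemma seq_a_idx:
  assumes p: "p > 1" and s: "\<sigma>' < \<sigma>" "\<sigma> < 1"
  shows "seq_a p \<sigma> \<sigma>' (idx p ((\<sigma> - \<sigma>') / (1 - \<sigma>)) r) = of_nat p ^ nat \<lfloor>\<sigma>' * real r\<rfloor>"
proof -
  let ?d = "(\<sigma> - \<sigma>') / (1 - \<sigma>)"
  have "?d \<ge> 0" using s by simp
  hence "inj (idx p ?d)" using idx_strict_mono[OF p] strict_mono_imp_inj_on by blast
  hence "(THE r'. idx p ?d r = idx p ?d r') = r" by (auto dest: injD)
  thus ?thesis unfolding seq_a_def Let_def by auto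
qed

lemma seq_a_outside:
  assumes "\<nexists>r. k = idx p ((\<sigma> - \<sigma>') / (1 - \<sigma>)) r"
  shows "seq_a p \<sigma> \<sigma>' k = 0"
  using assms unfolding seq_a_def Let_def by auto

text \<open>k_r + 1 = p^r (p^(m+1) + 1) with the second factor prime to p.\<close>
lemma multiplicity_idx_Suc:
  assumes p: "prime p"
  shows "multiplicity (int p) (int (idx p d r + 1)) = r"
proof -
  have p1: "p > 1" using p prime_gt_1_nat by auto
  have pe: "prime_elem (int p)" using p by simp
  define M where "M = int p ^ (nat \<lfloor>d * real r\<rfloor> + 1) + 1"
  have split: "int (idx p d r + 1) = int p ^ r * M"
    unfolding M_def idx_Suc[OF order.strict_trans[OF zero_less_one p1]] by (simp add: algebra_simps)
  have coprime: "\<not> int p dvd M"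
  proof
    assume "int p dvd M"
    hence "int p dvd 1" unfolding M_def by (simp add: dvd_add_right_iff)
    thus False using p1 by simp
  qed
  hence "M \<noteq> 0" by auto
  hence "multiplicity (int p) (int (idx p d r + 1))
         = multiplicity (int p) (int p ^ r) + multiplicity (int p) M"
    unfolding split using pe p1 by (intro prime_elem_multiplicity_mult_distrib) auto
  also have "\<dots> = r"
    using pe coprime by (simp add: multiplicity_prime_power not_dvd_imp_multiplicity_0)
  finally show ?thesis .
qed

subsection \<open>Absolute values of the coefficients of c_n\<close>

lemma padic_abs_coef_c:
  assumes p: "prime p" and s: "\<sigma>' < \<sigma>" "\<sigma> < 1"
    and k: "n + j = idx p ((\<sigma> - \<sigma>') / (1 - \<sigma>)) r"
  shows "padic_abs p (coef_c p \<sigma> \<sigma>' n j) = real p powr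
           (real (multiplicity (int p) (int (n + 1))) - real (nat \<lfloor>\<sigma>' * real r\<rfloor>)
            - real (multiplicity (int p) (int (n + j choose n))))"
proof -
  let ?e = "nat \<lfloor>\<sigma>' * real r\<rfloor>" and ?C = "int (n + j choose n)"
  have p1: "p > 1" using p prime_gt_1_nat by auto
  have "coef_c p \<sigma> \<sigma>' n j = of_int (int p ^ ?e * ?C) / of_int (int (n + 1))"
    unfolding coef_c_def k seq_a_idx[OF p1 s] by simp
  moreover have "?C \<noteq> 0" "int p ^ ?e \<noteq> 0" using p1 by simp_all
  hence "padic_abs p (of_int (int p ^ ?e * ?C) / of_int (int (n + 1))) = real p powr
           (real (multiplicity (int p) (int (n + 1))) - real (multiplicity (int p) (int p ^ ?e * ?C)))"
    by (intro padic_abs_of_int_div[OF p]) auto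
  moreover have "multiplicity (int p) (int p ^ ?e * ?C) = ?e + multiplicity (int p) ?C"
    using \<open>?C \<noteq> 0\<close> p by (simp add: prime_elem_multiplicity_mult_distrib multiplicity_prime_power)
  ultimately show ?thesis by (simp add: algebra_simps)
qed

lemma padic_abs_coef_c_le:
  assumes p: "prime p" and s: "0 \<le> \<sigma>'" "\<sigma>' < \<sigma>" "\<sigma> < 1"
  shows "padic_abs p (coef_c p \<sigma> \<sigma>' n j) \<le> real p * real (n + 1) powr (1 - \<sigma>')"
proof (cases "\<exists>r. n + j = idx p ((\<sigma> - \<sigma>') / (1 - \<sigma>)) r")
  case False
  hence "coef_c p \<sigma> \<sigma>' n j = 0" unfolding coef_c_def using seq_a_outside by auto
  thus ?thesis unfolding padic_abs_def by simp
next
  case True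
  then obtain r where k: "n + j = idx p ((\<sigma> - \<sigma>') / (1 - \<sigma>)) r" by blast
  let ?v = "\<lambda>x. multiplicity (int p) (int x)"
  let ?e = "nat \<lfloor>\<sigma>' * real r\<rfloor>"
  define u where "u = min r (?v (n + 1))"
  have p1: "p > 1" using p prime_gt_1_nat by auto
  have "?v (Suc (n + j)) = r" using multiplicity_idx_Suc[OF p] k by simp
  hence "?v (n + 1) \<le> r + ?v (n + j choose n)"
    using multiplicity_binomial_shift[OF p, of n "n + j"] by simp
  hence exp_le_u: "real (?v (n + 1)) - real ?e - real (?v (n + j choose n)) \<le> real u - real ?e"
    unfolding u_def by simp
  have "real ?e \<ge> \<sigma>' * real r - 1" using s(1) by linarith
  moreover have "\<sigma>' * real u \<le> \<sigma>' * real r" using s(1) unfolding u_def by (simp add: mult_left_mono)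
  ultimately have exp_le: "real u - real ?e \<le> 1 + real u * (1 - \<sigma>')" by (simp add: algebra_simps)
  have "int p ^ u dvd int (n + 1)" by (rule multiplicity_dvd') (simp add: u_def)
  hence "p ^ u dvd n + 1" by (metis of_nat_dvd_iff of_nat_power)
  hence "p ^ u \<le> n + 1" by (rule dvd_imp_le) simp
  hence pu: "real p ^ u \<le> real (n + 1)" by (metis of_nat_le_iff of_nat_power)
  have "padic_abs p (coef_c p \<sigma> \<sigma>' n j) \<le> real p powr (1 + real u * (1 - \<sigma>'))"
    unfolding padic_abs_coef_c[OF p s(2,3) k] using exp_le_u exp_le p1 by (intro powr_mono) auto
  also have "\<dots> = real p * (real p powr real u) powr (1 - \<sigma>')"
    using p1 by (simp add: powr_add powr_powr)
  also have "\<dots> = real p * (real p ^ u) powr (1 - \<sigma>')"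
    using p1 by (simp add: powr_realpow)
  also have "\<dots> \<le> real p * real (n + 1) powr (1 - \<sigma>')"
    using pu s p1 by (intro mult_left_mono powr_mono2) auto
  finally show ?thesis .
qed

lemma padic_abs_coef_c_ge:
  assumes p: "prime p" and s: "0 \<le> \<sigma>'" "\<sigma>' < \<sigma>" "\<sigma> < 1"
  shows "\<exists>j. real (p ^ r) powr (1 - \<sigma>') \<le> padic_abs p (coef_c p \<sigma> \<sigma>' (p ^ r - 1) j)"
proof -
  let ?d = "(\<sigma> - \<sigma>') / (1 - \<sigma>)" and ?e = "nat \<lfloor>\<sigma>' * real r\<rfloor>"
  define n where "n = p ^ r - 1"
  define N where "N = p ^ (r + (nat \<lfloor>?d * real r\<rfloor> + 1))"
  have p1: "p > 1" using p prime_gt_1_nat by auto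
  have n1: "n + 1 = p ^ r" unfolding n_def using p1 by simp
  have "idx p ?d r + 1 = N + (n + 1)" unfolding N_def n1 using idx_Suc p1
    by (simp add: power_add algebra_simps)
  hence k: "n + N = idx p ?d r" by simp
  have "multiplicity (int p) (int (n + N choose n)) = 0"
    unfolding add.commute[of n] by (rule multiplicity_binomial_unit[OF p, of r]) (use p1 in \<open>auto simp: N_def n_def power_add\<close>)
  moreover have "multiplicity (int p) (int (n + 1)) = r" unfolding n1 using p
    by (simp add: multiplicity_prime_power)
  ultimately have abs_eq: "padic_abs p (coef_c p \<sigma> \<sigma>' n N) = real p powr (real r - real ?e)"
    using padic_abs_coef_c[OF p s(2,3) k] by simp
  have "real ?e = real_of_int \<lfloor>\<sigma>' * real r\<rfloor>" using s(1) by simp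
  hence "real ?e \<le> \<sigma>' * real r" by linarith
  hence "real (p ^ r) powr (1 - \<sigma>') \<le> real p powr (real r - real ?e)"
    using p1 by (simp add: powr_realpow[symmetric] powr_powr algebra_simps)
  thus ?thesis unfolding abs_eq[symmetric] n_def by blast
qed

lemma eventually_powr_dominates:
  fixes lam mu B :: real
  assumes "lam < mu"
  shows "\<forall>\<^sub>F n in sequentially. B * real (n + 1) powr lam < real (n + 1) powr mu"
proof -
  define c where "c = mu - lam"
  define x where "x = max 1 B powr (1 / c)"
  have c: "c > 0" using assms by (simp add: c_def)
  have "B * real (n + 1) powr lam < real (n + 1) powr mu" if n: "n \<ge> nat \<lceil>x\<rceil>" for n
  proof -
    have "x < real (n + 1)" using n real_nat_ceiling_ge[of x] by linarith
    hence "x powr c < real (n + 1) powr c" using c by (intro powr_less_mono2) (auto simp: x_def)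
    moreover have "x powr c = max 1 B" using c by (simp add: x_def powr_powr)
    ultimately have "B < real (n + 1) powr c" by linarith
    hence "B * real (n + 1) powr lam < real (n + 1) powr c * real (n + 1) powr lam" by simp
    thus ?thesis by (simp add: c_def powr_add[symmetric])
  qed
  thus ?thesis unfolding eventually_sequentially by blast
qed

lemma SUP_divide_eq_infinity:
  fixes f :: "nat \<Rightarrow> ereal" and w :: "nat \<Rightarrow> real"
  assumes w: "\<And>n. w n > 0" and beats: "\<And>B. \<exists>n. ereal (B * w n) < f n"
  shows "(SUP n. f n / ereal (w n)) = \<infinity>"
proof (rule SUP_PInfty)
  fix m :: nat
  obtain n where "ereal (real m * w n) < f n" using beats by blast
  hence "ereal (real m) \<le> f n / ereal (w n)"
    using w[of n] by (simp add: ereal_le_divide_pos mult.commute)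
  thus "\<exists>n\<in>UNIV. ereal (real m) \<le> f n / ereal (w n)" by blast
qed

lemma gauss_norm_le: "(\<And>j. padic_abs p (f j) \<le> B) \<Longrightarrow> gauss_norm p f \<le> ereal B"
  unfolding gauss_norm_def by (rule SUP_least) simp

lemma gauss_norm_ge: "ereal (padic_abs p (f j)) \<le> gauss_norm p f"
  unfolding gauss_norm_def by (rule SUP_upper) simp

lemma gauss_norm_coef_c_le:
  assumes "prime p" and "0 \<le> \<sigma>'" and "\<sigma>' < \<sigma>" and "\<sigma> < 1"
  shows "gauss_norm p (coef_c p \<sigma> \<sigma>' n) \<le> ereal (real p * real (n + 1) powr (1 - \<sigma>'))"
  using padic_abs_coef_c_le[OF assms] by (rule gauss_norm_le)

lemma gauss_norm_coef_c_frequently_ge: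
  assumes p: "prime p" and s: "0 \<le> \<sigma>'" "\<sigma>' < \<sigma>" "\<sigma> < 1"
  shows "\<exists>\<^sub>F n in sequentially. ereal (real (n + 1) powr (1 - \<sigma>')) \<le> gauss_norm p (coef_c p \<sigma> \<sigma>' n)"
  unfolding frequently_sequentially
proof
  fix r
  have p1: "p > 1" using p prime_gt_1_nat by auto
  have "r < 2 ^ r" by (rule less_exp)
  also have "(2::nat) ^ r \<le> p ^ r" using p1 by (intro power_mono) auto
  finally have "r \<le> p ^ r - 1" by simp
  moreover have "p ^ r - 1 + 1 = p ^ r" using p1 by simp
  moreover obtain j where "real (p ^ r) powr (1 - \<sigma>') \<le> padic_abs p (coef_c p \<sigma> \<sigma>' (p ^ r - 1) j)"
    using padic_abs_coef_c_ge[OF p s] by blast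
  ultimately show "\<exists>n\<ge>r. ereal (real (n + 1) powr (1 - \<sigma>')) \<le> gauss_norm p (coef_c p \<sigma> \<sigma>' n)"
    by (metis ereal_less_eq(3) gauss_norm_ge order_trans)
qed

lemma gauss_norm_coef_c_frequently_gt:
  assumes "prime p" and "0 \<le> \<sigma>'" and "\<sigma>' < \<sigma>" and "\<sigma> < 1" and lam: "lam < 1 - \<sigma>'"
  shows "\<exists>\<^sub>F n in sequentially. ereal (B * real (n + 1) powr lam) < gauss_norm p (coef_c p \<sigma> \<sigma>' n)"
proof -
  have "\<forall>\<^sub>F n in sequentially. B * real (n + 1) powr lam < real (n + 1) powr (1 - \<sigma>')"
    using lam by (rule eventually_powr_dominates)
  with gauss_norm_coef_c_frequently_ge[OF assms(1-4)] show ?thesis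
  proof (rule frequently_eventually_conj[THEN frequently_elim1])
    fix n
    assume "B * real (n + 1) powr lam < real (n + 1) powr (1 - \<sigma>')
            \<and> ereal (real (n + 1) powr (1 - \<sigma>')) \<le> gauss_norm p (coef_c p \<sigma> \<sigma>' n)"
    thus "ereal (B * real (n + 1) powr lam) < gauss_norm p (coef_c p \<sigma> \<sigma>' n)"
      by (auto intro: less_le_trans[of _ "ereal (real (n + 1) powr (1 - \<sigma>'))"])
  qed
qed

theorem mainTheorem4:
  fixes p :: nat and \<sigma> \<sigma>' :: real
  assumes "prime p" and "0 \<le> \<sigma>'" and "\<sigma>' < \<sigma>" and "\<sigma> < 1"
  shows "(\<forall>n. gauss_norm p (coef_c p \<sigma> \<sigma>' n)
              \<le> ereal (real p * real (n + 1) powr (1 - \<sigma>')))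
       \<and> (\<forall>lam. 0 \<le> lam \<and> lam < 1 - \<sigma>' \<longrightarrow>
              (SUP n. gauss_norm p (coef_c p \<sigma> \<sigma>' n) / ereal (real (n + 1) powr lam)) = \<infinity>)
       \<and> exactly_log_growth p (coef_y p \<sigma> \<sigma>') (1 - \<sigma>')"
proof -
  note upper = gauss_norm_coef_c_le[OF assms]
  note beats = gauss_norm_coef_c_frequently_gt[OF assms]
  have coef_y_Suc: "coef_y p \<sigma> \<sigma>' (n + 1) = coef_c p \<sigma> \<sigma>' n" for n
    by (simp add: coef_y_def)
  have sup: "(SUP n. gauss_norm p (coef_c p \<sigma> \<sigma>' n) / ereal (real (n + 1) powr lam)) = \<infinity>"
    if "lam < 1 - \<sigma>'" for lam
    by (rule SUP_divide_eq_infinity) (use beats[OF that] frequently_ex in auto)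
  have "of_log_growth p (coef_y p \<sigma> \<sigma>') (1 - \<sigma>')"
    unfolding of_log_growth_def coef_y_Suc using upper by (blast intro: always_eventually)
  moreover have "\<not> of_log_growth p (coef_y p \<sigma> \<sigma>') lam" if "lam < 1 - \<sigma>'" for lam
  proof
    assume "of_log_growth p (coef_y p \<sigma> \<sigma>') lam"
    then obtain B where "\<forall>\<^sub>F n in sequentially.
        gauss_norm p (coef_c p \<sigma> \<sigma>' n) \<le> ereal (B * real (n + 1) powr lam)"
      unfolding of_log_growth_def coef_y_Suc by blast
    from frequently_eventually_conj[OF beats[OF that, where B = B] this] show False
      by (auto dest: frequently_ex)
  qed
  ultimately show ?thesis using upper sup unfolding exactly_log_growth_def by blast
qed

end
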